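(* Let $A$ be a real $m\times m$ matrix, $f\ne0$ in the range of $A$, $y$ the minimal-norm solution of $Ay=f$. Fix $q\in(0,1)$, $\alpha_0>0$, $C>1$, $\varepsilon\in(0,1)$. For each $\delta\in(0,1)$ let $f_\delta\in\mathbb{R}^m$ satisfy $\|f_\delta-f\|\le\delta$ and $(1-q)\alpha_0q\|Q_{\alpha_0q}^{-1}f_\delta\|>C\delta^\varepsilon$, and let $n_\delta$ be the smallest integer $n\ge1$ with $G_n\le C\delta^\varepsilon$ (the sequence $G_n$ built from $f_\delta$). Then $\lim_{\delta\to0}q^{n_\delta}=0$, and hence $\lim_{\delta\to0}n_\delta=\infty$.
   Context: $A^*$ is the transpose of $A$, $Q:=AA^*$, $Q_a:=Q+aI$ for $a>0$; $\|\cdot\|$ is the Euclidean norm. $G_0=0$ and $G_n=qG_{n-1}+(1-q)\alpha_0q^n\|Q_{\alpha_0q^n}^{-1}f_\delta\|$ for $n\ge1$. *)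

theory Defs
  imports "HOL-Analysis.Analysis"
begin

definition Qa :: "real^'m^'m \<Rightarrow> real \<Rightarrow> real^'m^'m" where
  "Qa A a = A ** transpose A + a *\<^sub>R mat 1"

primrec Gseq :: "real^'m^'m \<Rightarrow> real \<Rightarrow> real \<Rightarrow> real^'m \<Rightarrow> nat \<Rightarrow> real" where
  "Gseq A q \<alpha>0 fd 0 = 0"
| "Gseq A q \<alpha>0 fd (Suc n) = q * Gseq A q \<alpha>0 fd n
     + (1 - q) * \<alpha>0 * q ^ Suc n * norm (matrix_inv (Qa A (\<alpha>0 * q ^ Suc n)) *v fd)"

definition ndelta :: "real^'m^'m \<Rightarrow> real \<Rightarrow> real \<Rightarrow> real \<Rightarrow> real \<Rightarrow> real^'m \<Rightarrow> real \<Rightarrow> nat" where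
  "ndelta A q \<alpha>0 C \<epsilon> fd \<delta> = (LEAST n. 1 \<le> n \<and> Gseq A q \<alpha>0 fd n \<le> C * \<delta> powr \<epsilon>)"

end

theory Submission
  imports Defs
begin

(*
  Write f = A x and Q_a = A A^T + a I.  The quadratic form of Q_a is
  |A^T v|^2 + a |v|^2, so Q_a is coercive with constant a; hence it is invertible and
  a |Q_a^{-1} v| <= |v|.  Two consequences drive everything:
   (1) a |Q_a^{-1} f| <= sqrt a |x|, which tends to 0 as a = alpha0 q^n -> 0, and
   (2) a |Q_a^{-1} f_delta| differs from a |Q_a^{-1} f| by at most delta.
  From (1) and (2), G_n <= delta + K n r^n with r = sqrt q < 1, so for delta < C delta^eps
  some G_n with n >= 1 lies below the threshold and n_delta is well defined.  Since f <> 0,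
  for every fixed n the quantity G_n (computed from f_delta) stays bounded away from 0
  as delta -> 0 while C delta^eps -> 0, so eventually G_1, ..., G_N all exceed the
  threshold and n_delta > N.  An abstract lemma about least witnesses turns this into
  n_delta -> infinity, and q^(n_delta) -> 0 follows by composition with q^n -> 0.
*)

section \<open>The regularised operator \<open>Q_a\<close>\<close>

lemma Qa_mult: "Qa A a *v x = A *v (transpose A *v x) + a *\<^sub>R x"
  unfolding Qa_def
  by (simp add: matrix_vector_mult_add_rdistrib matrix_vector_mul_assoc[symmetric]
      scaleR_matrix_vector_assoc[symmetric])

lemma inner_matrix_transpose:
  fixes A :: "real^'n^'k"
  shows "(A *v z) \<bullet> x = z \<bullet> (transpose A *v x)"
  by (metis dot_lmul_matrix inner_commute transpose_matrix_vector)

lemma Qa_inner: "(Qa A a *v x) \<bullet> x = norm (transpose A *v x) ^ 2 + a * norm x ^ 2"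
proof -
  have "(Qa A a *v x) \<bullet> x = (A *v (transpose A *v x)) \<bullet> x + (a *\<^sub>R x) \<bullet> x"
    by (simp only: Qa_mult inner_add_left)
  also have "(A *v (transpose A *v x)) \<bullet> x = norm (transpose A *v x) ^ 2"
    by (simp add: inner_matrix_transpose power2_norm_eq_inner)
  also have "(a *\<^sub>R x) \<bullet> x = a * norm x ^ 2"
    by (simp add: power2_norm_eq_inner)
  finally show ?thesis .
qed

lemma Qa_coercive:
  assumes "0 < a"
  shows "a * norm x \<le> norm (Qa A a *v x)"
proof (cases "x = 0")
  case True
  then show ?thesis by simp
next
  case False
  have "(a * norm x) * norm x \<le> norm (transpose A *v x) ^ 2 + a * norm x ^ 2"
    by (simp add: power2_eq_square)
  also have "\<dots> = (Qa A a *v x) \<bullet> x"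
    by (rule Qa_inner[symmetric])
  also have "\<dots> \<le> norm (Qa A a *v x) * norm x"
    by (rule norm_cauchy_schwarz)
  finally show ?thesis
    using False by simp
qed

text \<open>Coercivity makes \<open>Q_a\<close> injective, hence invertible (it is square).\<close>

lemma Qa_invertible:
  assumes "0 < a"
  shows "invertible (Qa A a)"
proof -
  have "inj ((*v) (Qa A a))"
  proof (rule injI)
    fix x y
    assume "Qa A a *v x = Qa A a *v y"
    then have "Qa A a *v (x - y) = 0"
      by (simp add: matrix_vector_mult_diff_distrib)
    then have "a * norm (x - y) \<le> 0"
      using Qa_coercive[OF assms, of "x - y" A] by simp
    then show "x = y"
      using assms by (simp add: mult_le_0_iff)
  qed
  then show ?thesis
    by (simp add: invertible_left_inverse matrix_left_invertible_injective)
qed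

lemma matrix_inv_right:
  fixes M :: "'a::semiring_1^'n^'n"
  assumes "invertible M"
  shows "M ** matrix_inv M = mat 1"
  using assms unfolding invertible_def matrix_inv_def by (metis (mono_tags, lifting) someI_ex)

lemma Qa_inv_apply:
  assumes "0 < a"
  shows "Qa A a *v (matrix_inv (Qa A a) *v v) = v"
  by (metis matrix_inv_right[OF Qa_invertible[OF assms]] matrix_vector_mul_assoc
      matrix_vector_mul_lid)

lemma Qa_inv_nonzero:
  assumes "0 < a" and "v \<noteq> 0"
  shows "matrix_inv (Qa A a) *v v \<noteq> 0"
  using Qa_inv_apply[OF assms(1), of A v] assms(2) by auto

lemma Qa_inv_bound:
  assumes "0 < a"
  shows "a * norm (matrix_inv (Qa A a) *v v) \<le> norm v"
  using Qa_coercive[OF assms, of "matrix_inv (Qa A a) *v v" A]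
  by (simp add: Qa_inv_apply[OF assms])

lemma Qa_inv_perturb:
  assumes "0 < a"
  shows "\<bar>a * norm (matrix_inv (Qa A a) *v u) - a * norm (matrix_inv (Qa A a) *v v)\<bar>
           \<le> norm (u - v)"
proof -
  let ?M = "matrix_inv (Qa A a)"
  have "\<bar>a * norm (?M *v u) - a * norm (?M *v v)\<bar> = a * \<bar>norm (?M *v u) - norm (?M *v v)\<bar>"
    using assms by (simp add: abs_mult right_diff_distrib[symmetric])
  also have "\<dots> \<le> a * norm (?M *v u - ?M *v v)"
    using assms by (simp add: mult_left_mono norm_triangle_ineq3)
  also have "?M *v u - ?M *v v = ?M *v (u - v)"
    by (simp add: matrix_vector_mult_diff_distrib)
  also have "a * norm (?M *v (u - v)) \<le> norm (u - v)"
    by (rule Qa_inv_bound[OF assms])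
  finally show ?thesis .
qed

text \<open>On the range of \<open>A\<close> the resolvent is better by a factor \<open>sqrt a\<close>:
  \<open>a |Q_a\<^sup>-\<^sup>1 A x| \<le> sqrt a |x|\<close>.  This is what makes the noise-free part of \<open>G_n\<close> decay.\<close>

lemma Qa_inv_range:
  assumes "0 < a"
  shows "a * norm (matrix_inv (Qa A a) *v (A *v x)) \<le> sqrt a * norm x"
proof -
  define u where "u = a *\<^sub>R (matrix_inv (Qa A a) *v (A *v x))"
  define t where "t = norm (transpose A *v u)"
  have Qu: "Qa A a *v u = a *\<^sub>R (A *v x)"
    unfolding u_def by (simp add: matrix_vector_mult_scaleR Qa_inv_apply[OF assms])
  have "t ^ 2 + a * norm u ^ 2 = (Qa A a *v u) \<bullet> u"
    unfolding t_def by (simp add: Qa_inner)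
  also have "\<dots> = a * (x \<bullet> (transpose A *v u))"
    by (simp add: Qu inner_matrix_transpose)
  also have "\<dots> \<le> a * (norm x * t)"
    unfolding t_def using assms by (simp add: norm_cauchy_schwarz)
  finally have key: "t ^ 2 + a * norm u ^ 2 \<le> a * norm x * t"
    by simp
  have "0 \<le> a * norm u ^ 2"
    using assms by simp
  with key have t_sq: "t * t \<le> (a * norm x) * t"
    by (simp add: power2_eq_square)
  have u_sq: "a * norm u ^ 2 \<le> a * norm x * t"
    using key zero_le_power2[of t] by linarith
  have t_le: "t \<le> a * norm x"
  proof (cases "t = 0")
    case True
    then show ?thesis using assms by simp
  next
    case False
    then have "0 < t" unfolding t_def by simp
    with t_sq show ?thesis by simp
  qed
  have "a * norm u ^ 2 \<le> a * norm x * (a * norm x)"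
    using u_sq t_le assms by (simp add: mult_left_mono order_trans)
  then have "norm u ^ 2 \<le> a * norm x ^ 2"
    using assms by (simp add: power2_eq_square mult_ac)
  also have "\<dots> = (sqrt a * norm x) ^ 2"
    using assms by (simp add: power_mult_distrib)
  finally have "norm u ^ 2 \<le> (sqrt a * norm x) ^ 2" .
  then have "norm u \<le> sqrt a * norm x"
    by (rule power2_le_imp_le) (use assms in simp)
  then show ?thesis
    unfolding u_def using assms by simp
qed

section \<open>The sequence \<open>G_n\<close>\<close>

lemma Gseq_nonneg:
  assumes "0 \<le> q" "q \<le> 1" "0 \<le> \<alpha>0"
  shows "0 \<le> Gseq A q \<alpha>0 fd n"
  by (induction n) (use assms in auto)

lemma Gseq_lower:
  assumes "0 \<le> q" "q \<le> 1" "0 \<le> \<alpha>0"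
  shows "(1 - q) * (\<alpha>0 * q ^ Suc m * norm (matrix_inv (Qa A (\<alpha>0 * q ^ Suc m)) *v fd))
           \<le> Gseq A q \<alpha>0 fd (Suc m)"
  using Gseq_nonneg[OF assms, of A fd m] assms by (simp add: mult_ac)

text \<open>If every summand is bounded by \<open>d + K r\<^sup>k\<close> with \<open>q \<le> r\<close>, then \<open>G_n \<le> d + K n r\<^sup>n\<close>:
  \<open>G_n\<close> is a convex combination of its predecessor and the new summand.\<close>

lemma Gseq_upper:
  assumes q: "0 \<le> q" "q \<le> 1" "q \<le> r" and "0 \<le> d" "0 \<le> K"
    and summand: "\<And>k. \<alpha>0 * q ^ Suc k * norm (matrix_inv (Qa A (\<alpha>0 * q ^ Suc k)) *v fd)
                        \<le> d + K * r ^ Suc k"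
  shows "Gseq A q \<alpha>0 fd n \<le> d + K * (real n * r ^ n)"
proof (induction n)
  case 0
  then show ?case using \<open>0 \<le> d\<close> by simp
next
  case (Suc n)
  have "0 \<le> r" using q by linarith
  then have growth: "real n * (q * r ^ n) \<le> real n * r ^ Suc n"
    using q by (simp add: mult_left_mono mult_right_mono)
  have "Gseq A q \<alpha>0 fd (Suc n)
        = q * Gseq A q \<alpha>0 fd n
          + (1 - q) * (\<alpha>0 * q ^ Suc n * norm (matrix_inv (Qa A (\<alpha>0 * q ^ Suc n)) *v fd))"
    by (simp add: mult_ac)
  also have "\<dots> \<le> q * (d + K * (real n * r ^ n)) + (1 - q) * (d + K * r ^ Suc n)"
    using Suc summand[of n] q by (intro add_mono mult_left_mono) auto
  also have "\<dots> = d + K * (real n * (q * r ^ n) + (1 - q) * r ^ Suc n)"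
    by (simp add: algebra_simps)
  also have "\<dots> \<le> d + K * (real n * r ^ Suc n + r ^ Suc n)"
  proof -
    have "(1 - q) * r ^ Suc n \<le> r ^ Suc n"
      using q \<open>0 \<le> r\<close> by (simp add: mult_left_le_one_le)
    then show ?thesis
      using add_mono[OF growth] \<open>0 \<le> K\<close> by (simp add: mult_left_mono)
  qed
  also have "\<dots> = d + K * (real (Suc n) * r ^ Suc n)"
    by (simp add: algebra_simps)
  finally show ?case .
qed

text \<open>If the data lie within \<open>d\<close> of the range of \<open>A\<close> and \<open>d < t\<close>, some \<open>G_n\<close> with \<open>n \<ge> 1\<close>
  falls below \<open>t\<close>; hence the stopping index is well defined.\<close>

lemma Gseq_eventually_below:
  assumes q: "0 < q" "q < 1" and "0 < \<alpha>0"
    and close: "norm (fd - A *v x) \<le> d" and "d < t"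
  shows "\<exists>n\<ge>1. Gseq A q \<alpha>0 fd n \<le> t"
proof -
  define r where "r = sqrt q"
  define K where "K = sqrt \<alpha>0 * norm x"
  have "q ^ 2 \<le> q"
    using q by (simp add: power2_eq_square mult_left_le_one_le)
  then have r: "0 \<le> r" "r < 1" "q \<le> r"
    unfolding r_def using q by (auto intro: real_le_rsqrt)
  have "0 \<le> d"
    using close norm_ge_zero order_trans by blast
  have summand: "\<alpha>0 * q ^ Suc k * norm (matrix_inv (Qa A (\<alpha>0 * q ^ Suc k)) *v fd)
                   \<le> d + K * r ^ Suc k" for k
  proof -
    define a where "a = \<alpha>0 * q ^ Suc k"
    have "0 < a"
      unfolding a_def using \<open>0 < \<alpha>0\<close> q by simp
    have "a * norm (matrix_inv (Qa A a) *v fd)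
          \<le> a * norm (matrix_inv (Qa A a) *v (A *v x)) + norm (fd - A *v x)"
      using Qa_inv_perturb[OF \<open>0 < a\<close>, of A fd "A *v x"] by linarith
    also have "\<dots> \<le> sqrt a * norm x + d"
      using Qa_inv_range[OF \<open>0 < a\<close>, of A x] close by linarith
    also have "sqrt a * norm x = K * r ^ Suc k"
      unfolding a_def K_def r_def by (simp add: real_sqrt_mult real_sqrt_power mult_ac)
    finally show ?thesis
      unfolding a_def by simp
  qed
  have "(\<lambda>n. K * (real n * r ^ n)) \<longlonglongrightarrow> 0"
    using tendsto_mult_right_zero[OF powser_times_n_limit_0[of r]] r by simp
  then have "eventually (\<lambda>n. K * (real n * r ^ n) < t - d) sequentially"
    using \<open>d < t\<close> by (simp add: order_tendstoD(2))
  then obtain N where N: "\<And>n. n \<ge> N \<Longrightarrow> K * (real n * r ^ n) < t - d"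
    by (auto simp: eventually_sequentially)
  have "Gseq A q \<alpha>0 fd (max N 1) \<le> d + K * (real (max N 1) * r ^ max N 1)"
    using q \<open>0 \<le> d\<close> \<open>0 < \<alpha>0\<close> r
    by (intro Gseq_upper[OF _ _ r(3) _ _ summand]) (auto simp: K_def)
  also have "\<dots> < t"
    using N[of "max N 1"] by simp
  finally show ?thesis
    by (intro exI[of _ "max N 1"]) simp
qed

text \<open>For a fixed index, \<open>G_n\<close> stays above any threshold tending to 0 once the data are close
  enough to a nonzero \<open>f\<close>: its newest summand converges to a positive limit.\<close>

lemma Gseq_eventually_above:
  assumes q: "0 < q" "q < 1" and "0 < \<alpha>0" and "f \<noteq> 0"
    and close: "eventually (\<lambda>z. norm (fd z - f) \<le> e z) F"
    and e: "(e \<longlongrightarrow> 0) F" and t: "(t \<longlongrightarrow> 0) F"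
  shows "eventually (\<lambda>z. t z < Gseq A q \<alpha>0 (fd z) (Suc m)) F"
proof -
  define a where "a = \<alpha>0 * q ^ Suc m"
  define c where "c = a * norm (matrix_inv (Qa A a) *v f)"
  have "0 < a"
    unfolding a_def using \<open>0 < \<alpha>0\<close> q by simp
  then have "0 < c"
    unfolding c_def using Qa_inv_nonzero[OF \<open>0 < a\<close> \<open>f \<noteq> 0\<close>] by simp
  have "((\<lambda>z. (1 - q) * (c - e z) - t z) \<longlongrightarrow> (1 - q) * (c - 0) - 0) F"
    by (intro tendsto_intros e t)
  moreover have "0 < (1 - q) * (c - 0) - 0"
    using q \<open>0 < c\<close> by simp
  ultimately have "eventually (\<lambda>z. 0 < (1 - q) * (c - e z) - t z) F"
    by (rule order_tendstoD(1))
  then show ?thesis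
    using close
  proof eventually_elim
    case (elim z)
    have "c - e z \<le> a * norm (matrix_inv (Qa A a) *v fd z)"
      using Qa_inv_perturb[OF \<open>0 < a\<close>, of A "fd z" f] elim(2) unfolding c_def by linarith
    then have "(1 - q) * (c - e z) \<le> (1 - q) * (a * norm (matrix_inv (Qa A a) *v fd z))"
      using q by (simp add: mult_left_mono)
    also have "\<dots> \<le> Gseq A q \<alpha>0 (fd z) (Suc m)"
      unfolding a_def using q \<open>0 < \<alpha>0\<close> by (intro Gseq_lower) auto
    finally show ?case
      using elim(1) by linarith
  qed
qed

section \<open>Least witnesses tending to infinity\<close>

lemma Least_filterlim_at_top:
  fixes P :: "'a \<Rightarrow> nat \<Rightarrow> bool"
  assumes ex: "eventually (\<lambda>z. \<exists>n. P z n) F"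
    and not_P: "\<And>m. eventually (\<lambda>z. \<not> P z m) F"
  shows "filterlim (\<lambda>z. LEAST n. P z n) at_top F"
  unfolding filterlim_at_top
proof
  fix N :: nat
  have "eventually (\<lambda>z. \<forall>m\<in>{..<N}. \<not> P z m) F"
    using not_P by (intro eventually_ball_finite) auto
  then show "eventually (\<lambda>z. N \<le> (LEAST n. P z n)) F"
    using ex
  proof eventually_elim
    case (elim z)
    then have "P z (LEAST n. P z n)"
      by (auto intro: LeastI_ex)
    then show ?case
      using elim(1) by (meson lessThan_iff not_le)
  qed
qed

lemma below_threshold:
  fixes \<delta> C \<epsilon> :: real
  assumes "0 < \<delta>" "\<delta> < 1" "1 < C" "\<epsilon> < 1"
  shows "\<delta> < C * \<delta> powr \<epsilon>"
proof -
  have "\<delta> = \<delta> powr 1" using assms by simp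
  also have "\<dots> < \<delta> powr \<epsilon>" using assms by (intro powr_less_mono') auto
  also have "\<dots> < C * \<delta> powr \<epsilon>" using assms by simp
  finally show ?thesis .
qed

lemma threshold_tendsto_0:
  fixes C \<epsilon> :: real
  assumes "0 < \<epsilon>"
  shows "((\<lambda>\<delta>. C * \<delta> powr \<epsilon>) \<longlongrightarrow> 0) (at_right 0)"
proof -
  have "((\<lambda>\<delta>::real. \<delta> powr \<epsilon>) \<longlongrightarrow> 0) (at_right 0)"
    by (rule tendsto_zero_powrI[of _ _ "\<lambda>_. \<epsilon>" \<epsilon>])
      (auto intro: eventually_mono[OF eventually_at_right_less] simp: assms)
  then show ?thesis
    using tendsto_mult_right_zero by blast
qed

theorem lemma2p8:
  fixes A :: "real^'m^'m" and f y :: "real^'m" and q \<alpha>0 C \<epsilon> :: real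
    and fd :: "real \<Rightarrow> real^'m"
  assumes "f \<in> range (\<lambda>x. A *v x)" and "f \<noteq> 0"
    and "A *v y = f" and "\<forall>z. A *v z = f \<longrightarrow> norm y \<le> norm z"
    and "0 < q" "q < 1" "0 < \<alpha>0" "1 < C" "0 < \<epsilon>" "\<epsilon> < 1"
    and "\<forall>\<delta>\<in>{0<..<1}. norm (fd \<delta> - f) \<le> \<delta>
           \<and> (1 - q) * \<alpha>0 * q * norm (matrix_inv (Qa A (\<alpha>0 * q)) *v fd \<delta>) > C * \<delta> powr \<epsilon>"
  shows "((\<lambda>\<delta>. q ^ ndelta A q \<alpha>0 C \<epsilon> (fd \<delta>) \<delta>) \<longlongrightarrow> 0) (at_right 0)
    \<and> filterlim (\<lambda>\<delta>. ndelta A q \<alpha>0 C \<epsilon> (fd \<delta>) \<delta>) at_top (at_right 0)"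
proof -
  obtain x where f: "f = A *v x"
    using assms(1) by auto
  define P where "P = (\<lambda>\<delta> n. 1 \<le> n \<and> Gseq A q \<alpha>0 (fd \<delta>) n \<le> C * \<delta> powr \<epsilon>)"
  have small: "eventually (\<lambda>\<delta>::real. \<delta> \<in> {0<..<1}) (at_right 0)"
    by (rule eventually_at_right_real) simp
  then have close: "eventually (\<lambda>\<delta>. norm (fd \<delta> - f) \<le> \<delta>) (at_right 0)"
    by eventually_elim (use assms(11) in auto)
  have "eventually (\<lambda>\<delta>. \<exists>n. P \<delta> n) (at_right 0)"
    using small
  proof eventually_elim
    case (elim \<delta>)
    then have "norm (fd \<delta> - A *v x) \<le> \<delta>" and "\<delta> < C * \<delta> powr \<epsilon>"
      using assms(11) f below_threshold[OF _ _ \<open>1 < C\<close> \<open>\<epsilon> < 1\<close>] by auto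
    then show ?case
      unfolding P_def using Gseq_eventually_below[OF \<open>0 < q\<close> \<open>q < 1\<close> \<open>0 < \<alpha>0\<close>] by blast
  qed
  moreover have "eventually (\<lambda>\<delta>. \<not> P \<delta> m) (at_right 0)" for m
  proof (cases m)
    case 0
    then show ?thesis unfolding P_def by simp
  next
    case (Suc k)
    show ?thesis
      using Gseq_eventually_above[OF \<open>0 < q\<close> \<open>q < 1\<close> \<open>0 < \<alpha>0\<close> \<open>f \<noteq> 0\<close> close
          tendsto_ident_at threshold_tendsto_0[OF \<open>0 < \<epsilon>\<close>, of C], of A k]
      unfolding P_def Suc by (simp add: not_le del: Gseq.simps)
  qed
  ultimately have n_top: "filterlim (\<lambda>\<delta>. ndelta A q \<alpha>0 C \<epsilon> (fd \<delta>) \<delta>) at_top (at_right 0)"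
    unfolding ndelta_def P_def by (rule Least_filterlim_at_top)
  moreover have "((\<lambda>\<delta>. q ^ ndelta A q \<alpha>0 C \<epsilon> (fd \<delta>) \<delta>) \<longlongrightarrow> 0) (at_right 0)"
    using \<open>0 < q\<close> \<open>q < 1\<close> by (intro filterlim_compose[OF LIMSEQ_power_zero n_top]) simp
  ultimately show ?thesis by simp
qed

end
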